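(* Let $(X_t)_{t\ge0}$ be a real process and $r\in\mathbb R$, and for $0<\varepsilon\le1$ set $X_1^\varepsilon:=X_{\varepsilon^2}$. Assume $S_t:=e^{-rt}\exp(X_t)$ is a martingale and that there exist $p>1$ and $t>0$ with $E[S_t^p]<\infty$. Then $\limsup_{\varepsilon\to0}E[\exp(pX_1^\varepsilon)]<\infty$. *)

theory Defs
  imports "HOL-Probability.Probability"
begin

definition filtration_on :: "'a measure \<Rightarrow> (real \<Rightarrow> 'a measure) \<Rightarrow> bool" where
  "filtration_on M F \<longleftrightarrow>
     (\<forall>t\<ge>0. sigma_finite_subalgebra M (F t)) \<and>
     (\<forall>s t. 0 \<le> s \<longrightarrow> s \<le> t \<longrightarrow> sets (F s) \<subseteq> sets (F t))"

definition martingale :: "'a measure \<Rightarrow> (real \<Rightarrow> 'a measure) \<Rightarrow> (real \<Rightarrow> 'a \<Rightarrow> real) \<Rightarrow> bool" where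
  "martingale M F S \<longleftrightarrow>
     filtration_on M F \<and>
     (\<forall>t\<ge>0. integrable M (S t) \<and> S t \<in> borel_measurable (F t)) \<and>
     (\<forall>s t. 0 \<le> s \<longrightarrow> s \<le> t \<longrightarrow> (AE \<omega> in M. real_cond_exp M (F s) (S t) \<omega> = S s \<omega>))"

end

theory Submission
  imports Defs
begin

text \<open>The process S s = exp (-r s) exp (X s) is a positive martingale and x \<mapsto> x powr p is
  convex, so conditional Jensen makes E[S s powr p] nondecreasing in s. For \<epsilon>^2 \<le> t this gives
  E[exp (p X \<epsilon>^2)] = exp (p r \<epsilon>^2) E[S \<epsilon>^2 powr p] \<le> exp (\<bar>p r\<bar> t) E[S t powr p],
  a bound uniform in \<epsilon>.\<close>

lemma martingale_borel_measurable:
  assumes "martingale M F S" and "0 \<le> s"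
  shows "S s \<in> borel_measurable M"
proof -
  have "sigma_finite_subalgebra M (F s)" and "S s \<in> borel_measurable (F s)"
    using assms unfolding martingale_def filtration_on_def by blast+
  then show ?thesis
    using measurable_from_subalg sigma_finite_subalgebra.subalg by blast
qed

lemma martingale_powr_moment_mono:
  assumes mart: "martingale M F S" and "p \<ge> 1" and "0 \<le> s" "s \<le> t"
    and pos: "AE \<omega> in M. S t \<omega> > 0"
  shows "(\<integral>\<^sup>+ \<omega>. ennreal (S s \<omega> powr p) \<partial>M) \<le> (\<integral>\<^sup>+ \<omega>. ennreal (S t \<omega> powr p) \<partial>M)"
proof (cases "(\<integral>\<^sup>+ \<omega>. ennreal (S t \<omega> powr p) \<partial>M) = \<infinity>")
  case False
  interpret sigma_finite_subalgebra M "F s"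
    using mart \<open>0 \<le> s\<close> unfolding martingale_def filtration_on_def by blast
  have int_St: "integrable M (S t)" and cond_exp: "AE \<omega> in M. real_cond_exp M (F s) (S t) \<omega> = S s \<omega>"
    using mart assms(3,4) unfolding martingale_def by auto
  have meas_pow [measurable]: "(\<lambda>\<omega>. S t \<omega> powr p) \<in> borel_measurable M"
    using martingale_borel_measurable[OF mart] assms(3,4) by (intro powr_real_measurable) auto
  have int_pow: "integrable M (\<lambda>\<omega>. S t \<omega> powr p)"
    using False by (intro integrableI_nonneg) (auto simp: top.not_eq_extremum)
  have "AE \<omega> in M. real_cond_exp M (F s) (S t) \<omega> powr p \<le> real_cond_exp M (F s) (\<lambda>\<omega>. S t \<omega> powr p) \<omega>"
    by (rule real_cond_exp_jensens_inequality(2)[where I="{0<..}" and a=0])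
      (use int_St pos int_pow powr_convex[OF \<open>p \<ge> 1\<close>] in auto)
  with cond_exp have "AE \<omega> in M. S s \<omega> powr p \<le> real_cond_exp M (F s) (\<lambda>\<omega>. S t \<omega> powr p) \<omega>"
    by auto
  then have "(\<integral>\<^sup>+ \<omega>. ennreal (S s \<omega> powr p) \<partial>M)
      \<le> (\<integral>\<^sup>+ \<omega>. ennreal (real_cond_exp M (F s) (\<lambda>\<omega>. S t \<omega> powr p) \<omega>) \<partial>M)"
    by (intro nn_integral_mono_AE) (auto simp: ennreal_leI)
  also have "\<dots> = ennreal (\<integral>\<omega>. real_cond_exp M (F s) (\<lambda>\<omega>. S t \<omega> powr p) \<omega> \<partial>M)"
    using real_cond_exp_int(1)[OF int_pow] by (intro nn_integral_eq_integral real_cond_exp_pos) auto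
  also have "\<dots> = ennreal (\<integral>\<omega>. S t \<omega> powr p \<partial>M)"
    using real_cond_exp_int(2)[OF int_pow] by simp
  also have "\<dots> = (\<integral>\<^sup>+ \<omega>. ennreal (S t \<omega> powr p) \<partial>M)"
    using int_pow by (intro nn_integral_eq_integral[symmetric]) auto
  finally show ?thesis .
qed simp

lemma exp_moment_le_discounted_moment:
  fixes X :: "real \<Rightarrow> 'a \<Rightarrow> real" and r :: real
  defines "S \<equiv> \<lambda>s \<omega>. exp (- r * s) * exp (X s \<omega>)"
  assumes mart: "martingale M F S" and "p \<ge> 1" and "0 \<le> s" "s \<le> t"
  shows "(\<integral>\<^sup>+ \<omega>. ennreal (exp (p * X s \<omega>)) \<partial>M)
    \<le> ennreal (exp (\<bar>p * r\<bar> * t)) * (\<integral>\<^sup>+ \<omega>. ennreal (S t \<omega> powr p) \<partial>M)"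
proof -
  have "exp (p * X s \<omega>) = exp (p * r * s) * S s \<omega> powr p" for \<omega>
    by (simp add: S_def powr_def exp_add[symmetric] algebra_simps)
  then have "(\<integral>\<^sup>+ \<omega>. ennreal (exp (p * X s \<omega>)) \<partial>M)
      = ennreal (exp (p * r * s)) * (\<integral>\<^sup>+ \<omega>. ennreal (S s \<omega> powr p) \<partial>M)"
    using martingale_borel_measurable[OF mart \<open>0 \<le> s\<close>]
    by (simp add: ennreal_mult nn_integral_cmult)
  also have "\<dots> \<le> ennreal (exp (\<bar>p * r\<bar> * t)) * (\<integral>\<^sup>+ \<omega>. ennreal (S t \<omega> powr p) \<partial>M)"
  proof (intro mult_mono)
    have "p * r * s \<le> \<bar>p * r\<bar> * t"
      using assms(4,5) by (intro order.trans[OF mult_right_mono[OF abs_ge_self] mult_left_mono]) auto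
    then show "ennreal (exp (p * r * s)) \<le> ennreal (exp (\<bar>p * r\<bar> * t))"
      by (intro ennreal_leI) simp
    show "(\<integral>\<^sup>+ \<omega>. ennreal (S s \<omega> powr p) \<partial>M) \<le> (\<integral>\<^sup>+ \<omega>. ennreal (S t \<omega> powr p) \<partial>M)"
      by (rule martingale_powr_moment_mono[OF mart]) (use assms(3-5) in \<open>auto simp: S_def\<close>)
  qed auto
  finally show ?thesis .
qed

theorem lemma4p1:
  fixes M :: "'a measure" and F :: "real \<Rightarrow> 'a measure"
    and X :: "real \<Rightarrow> 'a \<Rightarrow> real" and r p t :: real
  assumes "prob_space M"
    and "martingale M F (\<lambda>s \<omega>. exp (- r * s) * exp (X s \<omega>))"
    and "p > 1" and "t > 0"
    and "(\<integral>\<^sup>+ \<omega>. ennreal ((exp (- r * t) * exp (X t \<omega>)) powr p) \<partial>M) < \<infinity>"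
  shows "Limsup (at_right (0::real)) (\<lambda>\<epsilon>. \<integral>\<^sup>+ \<omega>. ennreal (exp (p * X (\<epsilon>\<^sup>2) \<omega>)) \<partial>M) < \<infinity>"
proof -
  define K where "K = ennreal (exp (\<bar>p * r\<bar> * t))
    * (\<integral>\<^sup>+ \<omega>. ennreal ((exp (- r * t) * exp (X t \<omega>)) powr p) \<partial>M)"
  have "((\<lambda>\<epsilon>. \<epsilon>\<^sup>2) \<longlongrightarrow> 0) (at_right (0::real))"
    by (intro tendsto_eq_intros) auto
  then have "eventually (\<lambda>\<epsilon>. \<epsilon>\<^sup>2 < t) (at_right (0::real))"
    using \<open>t > 0\<close> by (rule order_tendstoD)
  then have "eventually (\<lambda>\<epsilon>. (\<integral>\<^sup>+ \<omega>. ennreal (exp (p * X (\<epsilon>\<^sup>2) \<omega>)) \<partial>M) \<le> K) (at_right 0)"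
  proof eventually_elim
    case (elim \<epsilon>)
    then show ?case
      unfolding K_def using exp_moment_le_discounted_moment[OF assms(2)] assms(3) by simp
  qed
  then have "Limsup (at_right 0) (\<lambda>\<epsilon>. \<integral>\<^sup>+ \<omega>. ennreal (exp (p * X (\<epsilon>\<^sup>2) \<omega>)) \<partial>M) \<le> K"
    by (rule Limsup_bounded)
  also have "K < \<infinity>"
    using assms(5) unfolding K_def by (simp add: ennreal_mult_less_top)
  finally show ?thesis .
qed

end
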